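(* Let $G=(V,E,w)$ be a connected edge-weighted graph with positive rational weights and at least two vertices. A set $S\subseteq V$ is a weighted partial positive influence connected dominating set (WPPICDS) if and only if $f(S)=h_{\max}+\frac{|V|-2}{L}$, where $f=h+c$ and $h_{\max}=\max_{X\subseteq V}h(X)$.
   Context: $N_A(v)=N(v)\cap A$, $W_A(v)=\sum_{u\in N_A(v)}w_{(v,u)}$, $W(v)=W_V(v)$. $h(A)=\sum_{v\in V}h_A(v)$ with $h_A(v)=W(v)/2$ if $v\in A$ or $W_A(v)\ge W(v)/2$, and $h_A(v)=W_A(v)$ otherwise. $L=\max_v l(v)$, where $l(v)$ is the lcm of the denominators of the reduced fractions $W(v)/2$ and of the weights of edges incident to $v$. $p(A)$ is the number of connected components of $G[A]$ ($p(\emptyset)=0$), $q(A)$ the number of connected components of the spanning subgraph $(V,\{e\in E: e\text{ has at least one endpoint in }A\})$, and $c(A)=\frac1L(|V|-q(A)-p(A))$. A WPPICDS is a set $S\subseteq V$ such that every $v\in V\setminus S$ satisfies $W_S(v)\ge W(v)/2$ and $G[S]$ is connected. *)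

theory Defs
  imports Complex_Main
begin

definition wgraph :: "'a set \<Rightarrow> ('a \<Rightarrow> 'a \<Rightarrow> bool) \<Rightarrow> ('a \<Rightarrow> 'a \<Rightarrow> rat) \<Rightarrow> bool" where
  "wgraph V E w \<longleftrightarrow> finite V \<and> (\<forall>u v. E u v \<longrightarrow> u \<in> V \<and> v \<in> V) \<and>
     (\<forall>u v. E u v \<longrightarrow> E v u) \<and> (\<forall>v. \<not> E v v) \<and> (\<forall>u v. w u v = w v u)"

definition pos_weights :: "('a \<Rightarrow> 'a \<Rightarrow> bool) \<Rightarrow> ('a \<Rightarrow> 'a \<Rightarrow> rat) \<Rightarrow> bool" where
  "pos_weights E w \<longleftrightarrow> (\<forall>u v. E u v \<longrightarrow> w u v > 0)"

definition reach_in :: "('a \<Rightarrow> 'a \<Rightarrow> bool) \<Rightarrow> 'a set \<Rightarrow> 'a \<Rightarrow> 'a \<Rightarrow> bool" where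
  "reach_in E A = (\<lambda>x y. E x y \<and> x \<in> A \<and> y \<in> A)\<^sup>*\<^sup>*"

definition connected_set :: "('a \<Rightarrow> 'a \<Rightarrow> bool) \<Rightarrow> 'a set \<Rightarrow> bool" where
  "connected_set E A \<longleftrightarrow> A \<noteq> {} \<and> (\<forall>x\<in>A. \<forall>y\<in>A. reach_in E A x y)"

definition nbhd :: "('a \<Rightarrow> 'a \<Rightarrow> bool) \<Rightarrow> 'a \<Rightarrow> 'a set" where
  "nbhd E v = {u. E v u}"

definition WA :: "('a \<Rightarrow> 'a \<Rightarrow> bool) \<Rightarrow> ('a \<Rightarrow> 'a \<Rightarrow> rat) \<Rightarrow> 'a set \<Rightarrow> 'a \<Rightarrow> rat" where
  "WA E w A v = (\<Sum>u\<in>nbhd E v \<inter> A. w v u)"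

definition Wt :: "'a set \<Rightarrow> ('a \<Rightarrow> 'a \<Rightarrow> bool) \<Rightarrow> ('a \<Rightarrow> 'a \<Rightarrow> rat) \<Rightarrow> 'a \<Rightarrow> rat" where
  "Wt V E w v = WA E w V v"

definition hA :: "'a set \<Rightarrow> ('a \<Rightarrow> 'a \<Rightarrow> bool) \<Rightarrow> ('a \<Rightarrow> 'a \<Rightarrow> rat) \<Rightarrow> 'a set \<Rightarrow> 'a \<Rightarrow> rat" where
  "hA V E w A v = (if v \<in> A \<or> WA E w A v \<ge> Wt V E w v / 2 then Wt V E w v / 2 else WA E w A v)"

definition hfun :: "'a set \<Rightarrow> ('a \<Rightarrow> 'a \<Rightarrow> bool) \<Rightarrow> ('a \<Rightarrow> 'a \<Rightarrow> rat) \<Rightarrow> 'a set \<Rightarrow> rat" where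
  "hfun V E w A = (\<Sum>v\<in>V. hA V E w A v)"

definition hmax :: "'a set \<Rightarrow> ('a \<Rightarrow> 'a \<Rightarrow> bool) \<Rightarrow> ('a \<Rightarrow> 'a \<Rightarrow> rat) \<Rightarrow> rat" where
  "hmax V E w = Max {hfun V E w X | X. X \<subseteq> V}"

definition denom :: "rat \<Rightarrow> int" where
  "denom r = snd (quotient_of r)"

definition lv :: "'a set \<Rightarrow> ('a \<Rightarrow> 'a \<Rightarrow> bool) \<Rightarrow> ('a \<Rightarrow> 'a \<Rightarrow> rat) \<Rightarrow> 'a \<Rightarrow> int" where
  "lv V E w v = Lcm (insert (denom (Wt V E w v / 2)) ((\<lambda>u. denom (w v u)) ` nbhd E v))"

definition Lconst :: "'a set \<Rightarrow> ('a \<Rightarrow> 'a \<Rightarrow> bool) \<Rightarrow> ('a \<Rightarrow> 'a \<Rightarrow> rat) \<Rightarrow> int" where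
  "Lconst V E w = Max (lv V E w ` V)"

text \<open>Number of connected components of G[A] (0 for A empty).\<close>
definition pfun :: "('a \<Rightarrow> 'a \<Rightarrow> bool) \<Rightarrow> 'a set \<Rightarrow> nat" where
  "pfun E A = card {{y\<in>A. reach_in E A x y} | x. x \<in> A}"

text \<open>Number of connected components of the spanning subgraph (V, edges with an endpoint in A).\<close>
definition qfun :: "'a set \<Rightarrow> ('a \<Rightarrow> 'a \<Rightarrow> bool) \<Rightarrow> 'a set \<Rightarrow> nat" where
  "qfun V E A = card {{y\<in>V. (\<lambda>a b. E a b \<and> (a \<in> A \<or> b \<in> A))\<^sup>*\<^sup>* x y} | x. x \<in> V}"

definition cfun :: "'a set \<Rightarrow> ('a \<Rightarrow> 'a \<Rightarrow> bool) \<Rightarrow> ('a \<Rightarrow> 'a \<Rightarrow> rat) \<Rightarrow> 'a set \<Rightarrow> rat" where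
  "cfun V E w A = (of_nat (card V) - of_nat (qfun V E A) - of_nat (pfun E A)) / of_int (Lconst V E w)"

definition ffun :: "'a set \<Rightarrow> ('a \<Rightarrow> 'a \<Rightarrow> bool) \<Rightarrow> ('a \<Rightarrow> 'a \<Rightarrow> rat) \<Rightarrow> 'a set \<Rightarrow> rat" where
  "ffun V E w A = hfun V E w A + cfun V E w A"

definition is_WPPICDS :: "'a set \<Rightarrow> ('a \<Rightarrow> 'a \<Rightarrow> bool) \<Rightarrow> ('a \<Rightarrow> 'a \<Rightarrow> rat) \<Rightarrow> 'a set \<Rightarrow> bool" where
  "is_WPPICDS V E w S \<longleftrightarrow> S \<subseteq> V \<and> (\<forall>v\<in>V - S. WA E w S v \<ge> Wt V E w v / 2) \<and> connected_set E S"

end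

theory Submission
  imports Defs
begin

text \<open>h(X) is a sum of terms h_X(v) \<le> W(v)/2 with equality for X = V, so h_max is the sum of
  the W(v)/2, and h(S) = h_max exactly when every vertex outside S receives at least half of its
  weight from S. For S \<noteq> {} both p(S) and q(S) are at least 1, and q({}) = |V| \<ge> 2, so always
  p + q \<ge> 2, i.e. c(S) \<le> (|V| - 2)/L. Hence f(S) attains the bound iff S is half-weight
  dominating and p(S) + q(S) = 2. In a connected graph with positive weights every W(v) is
  positive, so a dominating S is nonempty and every vertex outside S has a neighbour in S; then
  q(S) = 1 as soon as G[S] is connected, and p(S) + q(S) = 2 reduces to p(S) = 1.\<close>

definition half_weight_dominating ::
    "'a set \<Rightarrow> ('a \<Rightarrow> 'a \<Rightarrow> bool) \<Rightarrow> ('a \<Rightarrow> 'a \<Rightarrow> rat) \<Rightarrow> 'a set \<Rightarrow> bool" where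
  "half_weight_dominating V E w S \<longleftrightarrow> (\<forall>v\<in>V - S. WA E w S v \<ge> Wt V E w v / 2)"

lemma is_WPPICDS_iff:
  "is_WPPICDS V E w S \<longleftrightarrow> S \<subseteq> V \<and> half_weight_dominating V E w S \<and> connected_set E S"
  by (simp add: is_WPPICDS_def half_weight_dominating_def)

lemma wgraph_finite: "wgraph V E w \<Longrightarrow> finite V"
  by (simp add: wgraph_def)

definition classes :: "('a \<Rightarrow> 'a \<Rightarrow> bool) \<Rightarrow> 'a set \<Rightarrow> 'a set set" where
  "classes R A = {{y\<in>A. R x y} | x. x \<in> A}"

lemma classes_eq_image: "classes R A = (\<lambda>x. {y\<in>A. R x y}) ` A"
  by (auto simp: classes_def)

lemma card_classes_pos: "finite A \<Longrightarrow> A \<noteq> {} \<Longrightarrow> card (classes R A) > 0"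
  by (simp add: classes_eq_image card_gt_0_iff)

lemma card_classes_eq_1_iff:
  assumes "\<And>x. x \<in> A \<Longrightarrow> R x x"
  shows "card (classes R A) = 1 \<longleftrightarrow> A \<noteq> {} \<and> (\<forall>x\<in>A. \<forall>y\<in>A. R x y)"
proof
  assume "card (classes R A) = 1"
  then obtain C where C: "classes R A = {C}" by (rule card_1_singletonE)
  then have "A \<noteq> {}" by (auto simp: classes_def)
  moreover have "R x y" if "x \<in> A" "y \<in> A" for x y
  proof -
    have "{z\<in>A. R u z} = C" if "u \<in> A" for u
      using C imageI[OF that, of "\<lambda>x. {y\<in>A. R x y}"] by (simp add: classes_eq_image)
    then have "{z\<in>A. R x z} = {z\<in>A. R y z}" using \<open>x \<in> A\<close> \<open>y \<in> A\<close> by simp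
    moreover have "y \<in> {z\<in>A. R y z}" using assms \<open>y \<in> A\<close> by simp
    ultimately show "R x y" by (metis (no_types, lifting) mem_Collect_eq)
  qed
  ultimately show "A \<noteq> {} \<and> (\<forall>x\<in>A. \<forall>y\<in>A. R x y)" by blast
next
  assume "A \<noteq> {} \<and> (\<forall>x\<in>A. \<forall>y\<in>A. R x y)"
  then have "classes R A = {A}" by (auto simp: classes_eq_image)
  then show "card (classes R A) = 1" by simp
qed

abbreviation touching_edge :: "('a \<Rightarrow> 'a \<Rightarrow> bool) \<Rightarrow> 'a set \<Rightarrow> 'a \<Rightarrow> 'a \<Rightarrow> bool" where
  "touching_edge E A \<equiv> \<lambda>a b. E a b \<and> (a \<in> A \<or> b \<in> A)"

lemma pfun_eq_card_classes: "pfun E A = card (classes (reach_in E A) A)"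
  by (simp add: pfun_def classes_def)

lemma qfun_eq_card_classes: "qfun V E A = card (classes (touching_edge E A)\<^sup>*\<^sup>* V)"
  by (simp add: qfun_def classes_def)

lemma pfun_empty: "pfun E {} = 0"
  by (simp add: pfun_def)

lemma pfun_pos: "finite A \<Longrightarrow> A \<noteq> {} \<Longrightarrow> pfun E A > 0"
  by (simp add: pfun_eq_card_classes card_classes_pos)

lemma pfun_eq_1_iff: "pfun E A = 1 \<longleftrightarrow> connected_set E A"
  unfolding pfun_eq_card_classes connected_set_def
  by (rule card_classes_eq_1_iff) (simp add: reach_in_def)

lemma qfun_empty: "finite V \<Longrightarrow> qfun V E {} = card V"
proof -
  have "(touching_edge E {})\<^sup>*\<^sup>* x y \<longleftrightarrow> x = y" for x y
  proof
    assume "(touching_edge E {})\<^sup>*\<^sup>* x y"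
    then show "x = y" by (rule converse_rtranclpE) auto
  qed simp
  then have "classes (touching_edge E {})\<^sup>*\<^sup>* V = (\<lambda>x. {x}) ` V"
    by (auto simp: classes_eq_image)
  then show "qfun V E {} = card V"
    by (simp add: qfun_eq_card_classes card_image)
qed

lemma qfun_pos: "finite V \<Longrightarrow> V \<noteq> {} \<Longrightarrow> qfun V E A > 0"
  by (simp add: qfun_eq_card_classes card_classes_pos)

lemma qfun_plus_pfun_ge_2:
  assumes "finite V" "card V \<ge> 2" "A \<subseteq> V"
  shows "qfun V E A + pfun E A \<ge> 2"
proof (cases "A = {}")
  case True
  then show ?thesis using assms by (simp add: qfun_empty pfun_empty)
next
  case False
  have "V \<noteq> {}" using assms(2) by auto
  then have "qfun V E A > 0" using assms(1) by (simp add: qfun_pos)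
  moreover have "pfun E A > 0" using False assms(1,3) finite_subset by (blast intro: pfun_pos)
  ultimately show ?thesis by linarith
qed

lemma qfun_eq_1_if_dominated_by_connected:
  assumes "symp E" "S \<subseteq> V" "connected_set E S" "\<forall>v\<in>V - S. \<exists>s\<in>S. E v s"
  shows "qfun V E S = 1"
proof -
  let ?R = "touching_edge E S"
  obtain s0 where "s0 \<in> S" using assms(3) by (auto simp: connected_set_def)
  have "symp ?R" using assms(1) by (auto simp: symp_def)
  have "?R\<^sup>*\<^sup>* x s0" if "x \<in> V" for x
  proof -
    obtain s where s: "s \<in> S" "?R\<^sup>*\<^sup>* x s"
      using assms(4) \<open>x \<in> V\<close> by (cases "x \<in> S") auto
    have "reach_in E S s s0" using assms(3) s(1) \<open>s0 \<in> S\<close> by (simp add: connected_set_def)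
    then have "?R\<^sup>*\<^sup>* s s0"
      unfolding reach_in_def by (rule rtranclp_mono [THEN predicate2D, rotated]) auto
    with s(2) show ?thesis by (rule rtranclp_trans)
  qed
  then have "?R\<^sup>*\<^sup>* x y" if "x \<in> V" "y \<in> V" for x y
    using that sympD [OF symp_rtranclp [OF \<open>symp ?R\<close>]] by (blast intro: rtranclp_trans)
  moreover have "V \<noteq> {}" using \<open>s0 \<in> S\<close> assms(2) by blast
  ultimately show ?thesis
    unfolding qfun_eq_card_classes by (subst card_classes_eq_1_iff) auto
qed

lemma qfun_plus_pfun_eq_2_iff:
  assumes "symp E" "finite V" "S \<subseteq> V" "S \<noteq> {}" "\<forall>v\<in>V - S. \<exists>s\<in>S. E v s"
  shows "qfun V E S + pfun E S = 2 \<longleftrightarrow> connected_set E S"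
proof -
  have "qfun V E S > 0" using assms(2-4) qfun_pos by blast
  moreover have "pfun E S > 0" using assms(2-4) pfun_pos finite_subset by blast
  ultimately have "qfun V E S + pfun E S = 2 \<longleftrightarrow> pfun E S = 1 \<and> qfun V E S = 1" by linarith
  then show ?thesis
    using qfun_eq_1_if_dominated_by_connected [OF assms(1,3) _ assms(5)] pfun_eq_1_iff by blast
qed

lemma denom_pos: "denom r > 0"
  by (simp add: denom_def quotient_of_denom_pos')

lemma lv_pos:
  assumes "finite (nbhd E v)"
  shows "lv V E w v > 0"
proof -
  let ?D = "insert (denom (Wt V E w v / 2)) ((\<lambda>u. denom (w v u)) ` nbhd E v)"
  have "0 \<notin> ?D" using denom_pos by (auto simp: less_le)
  then have "Lcm ?D \<noteq> 0" using assms by (simp add: Lcm_0_iff)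
  moreover have "Lcm ?D \<ge> 0" by simp
  ultimately show ?thesis unfolding lv_def by linarith
qed

lemma Lconst_pos:
  assumes "wgraph V E w" "V \<noteq> {}"
  shows "Lconst V E w > 0"
proof -
  obtain v where "v \<in> V" using assms(2) by blast
  have "nbhd E v \<subseteq> V" using assms(1) by (auto simp: wgraph_def nbhd_def)
  then have "lv V E w v > 0" using wgraph_finite [OF assms(1)] by (simp add: lv_pos finite_subset)
  also have "lv V E w v \<le> Lconst V E w"
    unfolding Lconst_def using wgraph_finite [OF assms(1)] \<open>v \<in> V\<close> by simp
  finally show ?thesis .
qed

lemma cfun_le:
  assumes "wgraph V E w" "card V \<ge> 2" "A \<subseteq> V"
  shows "cfun V E w A \<le> (of_nat (card V) - 2) / of_int (Lconst V E w)"
proof -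
  have "Lconst V E w > 0" using assms(1,2) Lconst_pos by fastforce
  moreover have "qfun V E A + pfun E A \<ge> 2"
    using assms wgraph_finite qfun_plus_pfun_ge_2 by blast
  ultimately show ?thesis
    unfolding cfun_def by (intro divide_right_mono) (simp_all add: of_nat_add [symmetric])
qed

lemma cfun_eq_bound_iff:
  assumes "wgraph V E w" "V \<noteq> {}"
  shows "cfun V E w A = (of_nat (card V) - 2) / of_int (Lconst V E w) \<longleftrightarrow>
         qfun V E A + pfun E A = 2"
proof -
  have "(of_int (Lconst V E w) :: rat) \<noteq> 0" using Lconst_pos [OF assms] by simp
  then show ?thesis unfolding cfun_def by (simp add: divide_cancel_right) linarith
qed

lemma hA_le_half: "hA V E w A v \<le> Wt V E w v / 2"
  by (simp add: hA_def)

lemma hA_eq_half_iff: "hA V E w A v = Wt V E w v / 2 \<longleftrightarrow> v \<in> A \<or> WA E w A v \<ge> Wt V E w v / 2"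
  by (auto simp: hA_def)

lemma hmax_eq_sum:
  assumes "finite V"
  shows "hmax V E w = (\<Sum>v\<in>V. Wt V E w v / 2)"
  unfolding hmax_def
proof (rule Max_eqI)
  show "finite {hfun V E w X | X. X \<subseteq> V}"
    using assms by (simp add: setcompr_eq_image)
  show "y \<le> (\<Sum>v\<in>V. Wt V E w v / 2)" if "y \<in> {hfun V E w X | X. X \<subseteq> V}" for y
    using that by (auto simp: hfun_def intro: sum_mono hA_le_half)
  have "hfun V E w V = (\<Sum>v\<in>V. Wt V E w v / 2)"
    unfolding hfun_def by (rule sum.cong) (simp_all add: hA_def)
  then show "(\<Sum>v\<in>V. Wt V E w v / 2) \<in> {hfun V E w X | X. X \<subseteq> V}"
    by (metis (mono_tags, lifting) mem_Collect_eq order_refl)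
qed

lemma hfun_le_hmax: "finite V \<Longrightarrow> hfun V E w A \<le> hmax V E w"
  unfolding hmax_eq_sum hfun_def by (rule sum_mono) (rule hA_le_half)

lemma hfun_eq_hmax_iff:
  assumes "finite V"
  shows "hfun V E w S = hmax V E w \<longleftrightarrow> half_weight_dominating V E w S"
proof
  assume "hfun V E w S = hmax V E w"
  then have "hA V E w S v = Wt V E w v / 2" if "v \<in> V" for v
    using sum_mono_inv [OF _ hA_le_half that assms]
    by (simp add: hfun_def hmax_eq_sum [OF assms])
  then show "half_weight_dominating V E w S"
    unfolding half_weight_dominating_def by (metis DiffE hA_eq_half_iff)
next
  assume "half_weight_dominating V E w S"
  then show "hfun V E w S = hmax V E w"
    unfolding hfun_def hmax_eq_sum [OF assms] half_weight_dominating_def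
    by (intro sum.cong) (auto simp: hA_def)
qed

lemma wgraph_symp: "wgraph V E w \<Longrightarrow> symp E"
  by (auto simp: wgraph_def symp_def)

lemma connected_set_has_neighbour:
  assumes "connected_set E V" "card V \<ge> 2" "v \<in> V"
  obtains u where "E v u" "u \<in> V"
proof -
  obtain y where "y \<in> V" "y \<noteq> v"
  proof -
    have "\<not> V \<subseteq> {v}"
      using assms(2) card_mono [of "{v}" V] by auto
    then show ?thesis using that by blast
  qed
  then have "reach_in E V v y" using assms(1,3) by (simp add: connected_set_def)
  then show ?thesis
    using that \<open>y \<noteq> v\<close> unfolding reach_in_def by (blast elim: converse_rtranclpE)
qed

lemma Wt_pos:
  assumes "wgraph V E w" "pos_weights E w" "connected_set E V" "card V \<ge> 2" "v \<in> V"
  shows "Wt V E w v > 0"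
proof -
  obtain u where u: "E v u" "u \<in> V" using connected_set_has_neighbour [OF assms(3-5)] .
  have pos: "w v x > 0" if "x \<in> nbhd E v" for x
    using assms(2) that by (simp add: pos_weights_def nbhd_def)
  have "0 < w v u" using pos u by (simp add: nbhd_def)
  also have "\<dots> \<le> (\<Sum>x\<in>nbhd E v \<inter> V. w v x)"
    using u pos wgraph_finite [OF assms(1)]
    by (intro member_le_sum) (auto simp: nbhd_def less_imp_le)
  finally show ?thesis unfolding Wt_def WA_def .
qed

lemma dominated_vertex_has_neighbour:
  assumes "half_weight_dominating V E w S" "v \<in> V - S" "Wt V E w v > 0"
  shows "\<exists>s\<in>S. E v s"
proof -
  have "WA E w S v \<ge> Wt V E w v / 2"
    using assms(1,2) by (simp add: half_weight_dominating_def)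
  with assms(3) have "WA E w S v > 0" by linarith
  then have "nbhd E v \<inter> S \<noteq> {}" unfolding WA_def by auto
  then show ?thesis by (auto simp: nbhd_def)
qed

theorem mainTheorem19:
  fixes V :: "'a set" and E :: "'a \<Rightarrow> 'a \<Rightarrow> bool" and w :: "'a \<Rightarrow> 'a \<Rightarrow> rat"
    and S :: "'a set"
  assumes "wgraph V E w" and "pos_weights E w" and "connected_set E V" and "card V \<ge> 2"
    and "S \<subseteq> V"
  shows "is_WPPICDS V E w S \<longleftrightarrow>
         ffun V E w S = hmax V E w + (of_nat (card V) - 2) / of_int (Lconst V E w)"
proof -
  have fin: "finite V" and sym: "symp E"
    using assms(1) by (simp_all add: wgraph_finite wgraph_symp)
  have "V \<noteq> {}" using assms(3) by (simp add: connected_set_def)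
  have "ffun V E w S = hmax V E w + (of_nat (card V) - 2) / of_int (Lconst V E w) \<longleftrightarrow>
        hfun V E w S = hmax V E w \<and>
        cfun V E w S = (of_nat (card V) - 2) / of_int (Lconst V E w)"
    using hfun_le_hmax [OF fin, of E w S] cfun_le [OF assms(1,4,5)] unfolding ffun_def
    by linarith
  also have "\<dots> \<longleftrightarrow> half_weight_dominating V E w S \<and> qfun V E S + pfun E S = 2"
    by (simp add: hfun_eq_hmax_iff [OF fin] cfun_eq_bound_iff [OF assms(1) \<open>V \<noteq> {}\<close>])
  also have "\<dots> \<longleftrightarrow> half_weight_dominating V E w S \<and> connected_set E S"
  proof (intro conj_cong refl)
    assume dom: "half_weight_dominating V E w S"
    have nb: "\<forall>v\<in>V - S. \<exists>s\<in>S. E v s"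
      using dominated_vertex_has_neighbour [OF dom] Wt_pos [OF assms(1-4)] by blast
    then have "S \<noteq> {}" using \<open>V \<noteq> {}\<close> by blast
    then show "qfun V E S + pfun E S = 2 \<longleftrightarrow> connected_set E S"
      using qfun_plus_pfun_eq_2_iff [OF sym fin assms(5) _ nb] by blast
  qed
  finally show ?thesis using assms(5) by (simp add: is_WPPICDS_iff)
qed

end
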